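(* There is a set $E$ of natural numbers with $|\{n\in E: n\le x\}| = o(x/\log x)$ as $x\to\infty$ such that, for $n\notin E$, $$ \sum_{m\ge 2}\frac1m\sum_{\substack{q \text{ prime}\\ q^m\equiv \pm1 \ (\mathrm{mod}\ n)}}\frac{1}{q^m} = o\left(\frac1n\right) \quad (n\to\infty). $$
   Context: The inner sum runs over primes $q$ with $q^m\equiv 1$ or $q^m\equiv -1 \pmod n$. *)

theory Defs
  imports "HOL-Analysis.Analysis" "HOL-Number_Theory.Number_Theory" "HOL-Library.Landau_Symbols"
begin

definition pm_primes :: "nat \<Rightarrow> nat \<Rightarrow> nat set" where
  "pm_primes n m = {q. prime q \<and> ([int q ^ m = 1] (mod int n) \<or> [int q ^ m = -1] (mod int n))}"

definition S :: "nat \<Rightarrow> real" where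
  "S n = (\<Sum>\<^sub>\<infinity> m\<in>{2..}. (1 / real m) * (\<Sum>\<^sub>\<infinity> q\<in>pm_primes n m. 1 / real q ^ m))"

end

theory Submission
  imports Defs "HOL-Real_Asymp.Real_Asymp"
begin

text \<open>
  If \<open>q^m \<equiv> \<plusminus>1 (mod n)\<close>, then \<open>n\<close> divides \<open>Q - 1\<close> or \<open>Q + 1\<close>, where \<open>Q = q^m\<close>.
  Exchanging the order of summation in \<open>\<Sum>\<^sub>n\<^sub>\<le>\<^sub>N n S(n)\<close>, each prime power \<open>Q = q^m\<close>
  with \<open>m \<ge> 2\<close> contributes at most \<open>1/Q\<close> times the sum of the divisors \<open>d \<le> N\<close> of \<open>Q \<plusminus> 1\<close>.
  Bounding each such \<open>d\<close> by \<open>N^(35/36) Q^(1/36)\<close> and the number of divisors of \<open>M\<close> by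
  \<open>3 M^(4/9)\<close> leaves \<open>\<Sum> Q^(-19/36)\<close>, which converges since \<open>m \<ge> 2\<close>. Hence
  \<open>\<Sum>\<^sub>n\<^sub>\<le>\<^sub>N n S(n) = O(N^(35/36))\<close>, and by Markov's inequality the set \<open>E\<close> of \<open>n\<close> with
  \<open>n S(n) > n^(-1/72)\<close> has only \<open>O(x^(71/72)) = o(x / log x)\<close> elements up to \<open>x\<close>.
\<close>

definition divisor_count :: "nat \<Rightarrow> nat" where
  "divisor_count M = card {d. d dvd M}"

lemma divisor_count_prime_power_mult:
  assumes "prime p" "N > 0"
  shows "divisor_count (p ^ e * N) \<le> (e + 1) * divisor_count N"
proof -
  have "{d. d dvd p ^ e * N} \<subseteq> (\<lambda>(i, d). p ^ i * d) ` ({0..e} \<times> {d. d dvd N})"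
  proof
    fix d assume "d \<in> {d. d dvd p ^ e * N}"
    then obtain b c where bc: "d = b * c" "b dvd p ^ e" "c dvd N"
      using division_decomp by blast
    with assms(1) obtain i where "i \<le> e" "b = p ^ i"
      using divides_primepow_nat by blast
    with bc show "d \<in> (\<lambda>(i, d). p ^ i * d) ` ({0..e} \<times> {d. d dvd N})"
      by (intro image_eqI[of _ _ "(i, c)"]) auto
  qed
  moreover have "finite {d. d dvd N}"
    using assms(2) by simp
  ultimately have "divisor_count (p ^ e * N) \<le> card ((\<lambda>(i, d). p ^ i * d) ` ({0..e} \<times> {d. d dvd N}))"
    unfolding divisor_count_def by (intro card_mono) auto
  also have "\<dots> \<le> card ({0..e} \<times> {d. d dvd N})"
    using \<open>finite {d. d dvd N}\<close> by (intro card_image_le) auto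
  finally show ?thesis
    by (simp add: divisor_count_def card_cartesian_product)
qed

lemma divisor_count_pow9_le_if_coprime_6:
  assumes "B > 0" "coprime B 6"
  shows "divisor_count B ^ 9 \<le> B ^ 4"
  using assms
proof (induction B rule: less_induct)
  case (less B)
  show ?case
  proof (cases "B = 1")
    case True
    then show ?thesis by (simp add: divisor_count_def)
  next
    case False
    then obtain p B' where p: "prime p" and B: "B = p * B'"
      using prime_factor_nat by (metis dvd_def)
    have "B' > 0" "coprime B' 6"
      using less.prems B by auto
    have "\<not> p dvd 6"
      using p less.prems(2) B
      by (metis coprime_common_divisor dvd_triv_left not_prime_unit)
    then have "p \<noteq> 2" "p \<noteq> 3"
      by auto
    then have "odd p"
      using p prime_ge_2_nat[OF p] by (intro prime_odd_nat) auto
    with \<open>p \<noteq> 3\<close> prime_ge_2_nat[OF p] have "p \<ge> 5"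
      by presburger
    then have "B' < B"
      using B \<open>B' > 0\<close> by simp
    then have IH: "divisor_count B' ^ 9 \<le> B' ^ 4"
      using less.IH \<open>B' > 0\<close> \<open>coprime B' 6\<close> by blast
    have "divisor_count B \<le> 2 * divisor_count B'"
      using divisor_count_prime_power_mult[OF p \<open>B' > 0\<close>, of 1] B by simp
    then have "divisor_count B ^ 9 \<le> 2 ^ 9 * divisor_count B' ^ 9"
      by (metis power_mono power_mult_distrib zero_le)
    also have "\<dots> \<le> 5 ^ 4 * B' ^ 4"
      using IH by simp
    also have "\<dots> \<le> p ^ 4 * B' ^ 4"
      using \<open>p \<ge> 5\<close> by (intro mult_right_mono power_mono) auto
    finally show ?thesis
      by (simp add: B power_mult_distrib)
  qed
qed

lemma Suc_pow9_le_16_pow: "(a + 1 :: nat) ^ 9 \<le> 100 * 16 ^ a"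
proof (cases "a \<ge> 2")
  case False
  then consider "a = 0" | "a = 1"
    by linarith
  then show ?thesis
    by cases (simp_all add: numeral_eq_Suc)
next
  case True
  then show ?thesis
  proof (induction a rule: dec_induct)
    case base
    then show ?case by simp
  next
    case (step a)
    have "(3 * (a + 2)) ^ 9 \<le> (4 * (a + 1)) ^ 9"
      using step.hyps by (intro power_mono) auto
    then have "19683 * (a + 2) ^ 9 \<le> 262144 * (a + 1) ^ 9"
      by (simp only: power_mult_distrib) simp
    then have "(a + 2) ^ 9 \<le> 16 * (a + 1) ^ 9"
      by linarith
    also have "\<dots> \<le> 16 * (100 * 16 ^ a)"
      using step.IH by simp
    finally show ?case
      by simp
  qed
qed

lemma divisor_count_pow9_le:
  assumes "M > 0"
  shows "divisor_count M ^ 9 \<le> 10000 * M ^ 4"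
proof -
  obtain M' where M: "M = 2 ^ multiplicity 2 M * M'" "\<not> 2 dvd M'"
    by (rule multiplicity_decompose'[where p = 2 and x = M]) (use assms in auto)
  obtain B where M': "M' = 3 ^ multiplicity 3 M' * B" "\<not> 3 dvd B"
    by (rule multiplicity_decompose'[where p = 3 and x = M']) (use M(2) in \<open>auto intro: gr0I\<close>)
  define a b where "a = multiplicity 2 M" and "b = multiplicity 3 M'"
  have M_eq: "M = 2 ^ a * (3 ^ b * B)"
    using M(1) M'(1) unfolding a_def b_def by simp
  have "M' > 0" "B > 0"
    using M(2) M'(2) by (auto intro: gr0I)
  have "coprime B 6"
  proof -
    have "\<not> 2 dvd B"
      using M(2) M'(1) by (metis dvd_mult)
    then have "coprime B 2" "coprime B 3"
      using M'(2) by (simp_all add: prime_imp_coprime coprime_commute[of B])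
    then show ?thesis
      using coprime_mult_right_iff[of B 2 3] by simp
  qed
  have "divisor_count M \<le> (a + 1) * divisor_count M'"
    using divisor_count_prime_power_mult[OF two_is_prime_nat \<open>M' > 0\<close>, of a] M(1)
    unfolding a_def by simp
  also have "\<dots> \<le> (a + 1) * ((b + 1) * divisor_count B)"
    using divisor_count_prime_power_mult[of 3 B b] \<open>B > 0\<close> M'(1)
    unfolding b_def by (intro mult_le_mono2) simp
  finally have "divisor_count M ^ 9 \<le> ((a + 1) * ((b + 1) * divisor_count B)) ^ 9"
    by (rule power_mono) simp
  also have "\<dots> = (a + 1) ^ 9 * ((b + 1) ^ 9 * divisor_count B ^ 9)"
    by (simp only: power_mult_distrib)
  also have "\<dots> \<le> (100 * 16 ^ a) * ((100 * 16 ^ b) * B ^ 4)"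
    using Suc_pow9_le_16_pow[of a] Suc_pow9_le_16_pow[of b]
      divisor_count_pow9_le_if_coprime_6[OF \<open>B > 0\<close> \<open>coprime B 6\<close>]
    by (intro mult_le_mono) auto
  also have "\<dots> \<le> (100 * 16 ^ a) * ((100 * 81 ^ b) * B ^ 4)"
    by (intro mult_le_mono order.refl power_mono) auto
  also have "\<dots> = 10000 * ((2 ^ a) ^ 4 * (3 ^ b) ^ 4 * B ^ 4)"
  proof -
    have "((2::nat) ^ a) ^ 4 = (2 ^ 4) ^ a" "((3::nat) ^ b) ^ 4 = (3 ^ 4) ^ b"
      by (simp_all only: power_mult[symmetric] mult.commute)
    then show ?thesis
      by simp
  qed
  also have "\<dots> = 10000 * M ^ 4"
    unfolding M_eq by (simp add: power_mult_distrib)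
  finally show ?thesis .
qed

lemma divisor_count_le_powr:
  assumes "M > 0"
  shows "real (divisor_count M) \<le> 3 * real M powr (4/9)"
proof -
  have "(real M powr (4/9)) ^ 9 = real M powr (4/9 * 9)"
    using assms by (subst powr_realpow [symmetric]) (simp_all add: powr_powr)
  also have "\<dots> = real M ^ 4"
    using assms by (simp add: powr_realpow)
  finally have bound: "(3 * real M powr (4/9)) ^ 9 = 19683 * real M ^ 4"
    by (simp only: power_mult_distrib) simp
  have "real (divisor_count M ^ 9) \<le> real (10000 * M ^ 4)"
    using divisor_count_pow9_le[OF assms] by (simp only: of_nat_le_iff)
  then have "real (divisor_count M) ^ 9 \<le> 10000 * real M ^ 4"
    by simp
  also have "\<dots> \<le> (3 * real M powr (4/9)) ^ 9"
    unfolding bound by simp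
  finally have "real (divisor_count M) ^ Suc 8 \<le> (3 * real M powr (4/9)) ^ Suc 8"
    by simp
  then show ?thesis
    by (rule power_le_imp_le_base) simp
qed

lemma sum_bounded_divisors_le:
  assumes "M > 0" "0 \<le> \<theta>" "\<theta> \<le> 1"
  shows "(\<Sum>n | n \<in> {1..N} \<and> n dvd M. real n)
           \<le> real (divisor_count M) * (real N powr (1 - \<theta>) * real M powr \<theta>)"
proof -
  have "real n \<le> real N powr (1 - \<theta>) * real M powr \<theta>" if "n \<in> {1..N}" "n dvd M" for n
  proof -
    have "n \<le> M"
      using that assms(1) by (simp add: dvd_imp_le)
    have "real n = real n powr (1 - \<theta>) * real n powr \<theta>"
      using that by (simp flip: powr_add)
    also have "\<dots> \<le> real N powr (1 - \<theta>) * real M powr \<theta>"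
      using that \<open>n \<le> M\<close> assms by (intro mult_mono powr_mono2) auto
    finally show ?thesis .
  qed
  then have "(\<Sum>n | n \<in> {1..N} \<and> n dvd M. real n)
               \<le> real (card {n. n \<in> {1..N} \<and> n dvd M}) * (real N powr (1 - \<theta>) * real M powr \<theta>)"
    by (intro sum_bounded_above) auto
  also have "\<dots> \<le> real (divisor_count M) * (real N powr (1 - \<theta>) * real M powr \<theta>)"
  proof (rule mult_right_mono)
    have "card {n. n \<in> {1..N} \<and> n dvd M} \<le> divisor_count M"
      unfolding divisor_count_def using assms(1) by (intro card_mono) auto
    then show "real (card {n. n \<in> {1..N} \<and> n dvd M}) \<le> real (divisor_count M)"
      by simp
  qed simp
  finally show ?thesis .
qed

lemma summable_on_product_nonneg:
  fixes f g :: "_ \<Rightarrow> real"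
  assumes "f summable_on A" "g summable_on B"
    and "\<And>x. x \<in> A \<Longrightarrow> f x \<ge> 0" "\<And>y. y \<in> B \<Longrightarrow> g y \<ge> 0"
  shows "(\<lambda>(x, y). f x * g y) summable_on A \<times> B"
proof (rule summable_on_SigmaI[where g = "\<lambda>x. f x * infsum g B"])
  show "((\<lambda>y. case (x, y) of (x, y) \<Rightarrow> f x * g y) has_sum f x * infsum g B) B" for x
    using has_sum_cmult_right[OF has_sum_infsum[OF assms(2)]] by simp
  show "(\<lambda>x. f x * infsum g B) summable_on A"
    using assms(1) by (rule summable_on_cmult_left)
qed (use assms(3,4) in auto)

lemma summable_on_powr_pairs:
  assumes "c > 1/2"
  shows "(\<lambda>(m, a). real a powr (-(c * real m))) summable_on {2..} \<times> {2..}"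
proof (rule summable_on_comparison_test)
  define r :: real where "r = 2 powr (-c)"
  have "0 < r" "r < 1"
    using assms unfolding r_def by (auto intro: powr_less_one)
  have "(\<lambda>m. r ^ m / r ^ 2) summable_on {2..}"
  proof -
    have "(\<lambda>m. r ^ m / r ^ 2) summable_on UNIV"
      using \<open>0 < r\<close> \<open>r < 1\<close>
      by (subst summable_on_UNIV_nonneg_real_iff) (auto intro: summable_divide summable_geometric)
    then show ?thesis
      by (rule summable_on_subset_banach) simp
  qed
  moreover have "(\<lambda>a. real a powr (-(2 * c))) summable_on {2..}"
  proof -
    have "(\<lambda>a. real a powr (-(2 * c))) summable_on UNIV"
      using assms by (subst summable_on_UNIV_nonneg_real_iff) (auto simp: summable_real_powr_iff)
    then show ?thesis
      by (rule summable_on_subset_banach) simp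
  qed
  ultimately show "(\<lambda>(m, a). r ^ m / r ^ 2 * real a powr (-(2 * c))) summable_on {2..} \<times> {2..}"
    using \<open>0 < r\<close> by (intro summable_on_product_nonneg) auto
  show "(case x of (m, a) \<Rightarrow> real a powr (-(c * real m)))
          \<le> (case x of (m, a) \<Rightarrow> r ^ m / r ^ 2 * real a powr (-(2 * c)))"
    if "x \<in> {2..} \<times> {2..}" for x
  proof -
    obtain m a where x: "x = (m, a)" "m \<ge> 2" "a \<ge> 2"
      using \<open>x \<in> {2..} \<times> {2..}\<close> by auto
    have "real a powr (-(c * real m)) = real a powr (-(2 * c)) * real a powr (-(c * (real m - 2)))"
      by (simp flip: powr_add add: algebra_simps)
    also have "\<dots> \<le> real a powr (-(2 * c)) * 2 powr (-(c * (real m - 2)))"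
      using x assms by (intro mult_left_mono powr_mono2') auto
    also have "2 powr (-(c * (real m - 2))) = r ^ m / r ^ 2"
    proof -
      have "r ^ m = 2 powr (real m * -c)" "r ^ 2 = 2 powr (real 2 * -c)"
        unfolding r_def by (subst powr_power; simp)+
      then have "r ^ m / r ^ 2 = 2 powr (real m * -c - real 2 * -c)"
        by (simp only: powr_diff)
      then show ?thesis
        by (simp add: algebra_simps)
    qed
    finally show ?thesis
      using x by (simp add: mult.commute)
  qed
qed auto

lemma has_sum_sum:
  fixes f :: "'i \<Rightarrow> 'a \<Rightarrow> 'b::topological_comm_monoid_add"
  assumes "finite I" "\<And>i. i \<in> I \<Longrightarrow> (f i has_sum s i) A"
  shows "((\<lambda>x. \<Sum>i\<in>I. f i x) has_sum (\<Sum>i\<in>I. s i)) A"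
  using assms by (induction I rule: finite_induct) (auto intro: has_sum_add)

definition pm_weight :: "nat \<Rightarrow> nat \<times> nat \<Rightarrow> real" where
  "pm_weight n = (\<lambda>(m, q). if q \<in> pm_primes n m then 1 / real m * (1 / real q ^ m) else 0)"

lemma pm_primes_subset: "pm_primes n m \<subseteq> {2..}"
  unfolding pm_primes_def using prime_ge_2_nat by auto

lemma pm_weight_summable: "pm_weight n summable_on {2..} \<times> {2..}"
proof (rule summable_on_comparison_test)
  show "(\<lambda>(m, q). real q powr (-(1 * real m))) summable_on {2..} \<times> {2..}"
    by (rule summable_on_powr_pairs) simp
  show "pm_weight n x \<le> (\<lambda>(m, q). real q powr (-(1 * real m))) x" if "x \<in> {2..} \<times> {2..}" for x
    using that unfolding pm_weight_def
    by (auto simp: powr_minus powr_realpow divide_inverse inverse_le_1_iff intro!: mult_left_le_one_le)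
qed (auto simp: pm_weight_def)

lemma S_has_sum: "(pm_weight n has_sum S n) ({2..} \<times> {2..})"
proof -
  have "S n = infsum (\<lambda>m. infsum (\<lambda>q. pm_weight n (m, q)) {2..}) {2..}"
    unfolding S_def
  proof (intro infsum_cong)
    fix m
    have "1 / real m * infsum (\<lambda>q. 1 / real q ^ m) (pm_primes n m)
            = infsum (\<lambda>q. 1 / real m * (1 / real q ^ m)) (pm_primes n m)"
      by (rule infsum_cmult_right'[symmetric])
    also have "\<dots> = infsum (\<lambda>q. pm_weight n (m, q)) {2..}"
      using pm_primes_subset by (intro infsum_cong_neutral) (auto simp: pm_weight_def)
    finally show "1 / real m * infsum (\<lambda>q. 1 / real q ^ m) (pm_primes n m)
                    = infsum (\<lambda>q. pm_weight n (m, q)) {2..}" .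
  qed
  also have "\<dots> = infsum (pm_weight n) ({2..} \<times> {2..})"
    using pm_weight_summable by (rule infsum_Sigma_banach)
  finally show ?thesis
    using pm_weight_summable by (simp add: has_sum_infsum)
qed

lemma pm_primes_dvd:
  assumes "q \<in> pm_primes n m"
  shows "n dvd q ^ m - 1 \<or> n dvd q ^ m + 1"
proof -
  have "q \<ge> 2"
    using assms pm_primes_subset by blast
  then have "q ^ m \<ge> 1"
    by simp
  from assms consider "[int q ^ m = 1] (mod int n)" | "[int q ^ m = -1] (mod int n)"
    unfolding pm_primes_def by auto
  then show ?thesis
  proof cases
    case 1
    then have "int n dvd int (q ^ m - 1)"
      using \<open>q ^ m \<ge> 1\<close> by (simp add: cong_iff_dvd_diff of_nat_diff)
    then show ?thesis
      by (simp only: int_dvd_int_iff simp_thms)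
  next
    case 2
    then have "int n dvd int (q ^ m + 1)"
      by (simp add: cong_iff_dvd_diff add.commute)
    then show ?thesis
      by (simp only: int_dvd_int_iff simp_thms)
  qed
qed

lemma sum_bounded_divisors_le_powr:
  assumes "M > 0"
  shows "(\<Sum>n | n \<in> {1..N} \<and> n dvd M. real n) \<le> 3 * real N powr (35/36) * real M powr (17/36)"
proof -
  have "(\<Sum>n | n \<in> {1..N} \<and> n dvd M. real n)
          \<le> real (divisor_count M) * (real N powr (35/36) * real M powr (1/36))"
    using sum_bounded_divisors_le[of M "1/36" N] assms by simp
  also have "\<dots> \<le> 3 * real M powr (4/9) * (real N powr (35/36) * real M powr (1/36))"
    using divisor_count_le_powr[OF assms] by (intro mult_right_mono) auto
  also have "\<dots> = 3 * real N powr (35/36) * real M powr (17/36)"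
    by (simp add: powr_add [symmetric] algebra_simps)
  finally show ?thesis .
qed

lemma sum_mult_pm_weight_le:
  assumes "m \<ge> 1"
  shows "(\<Sum>n\<in>{1..N}. real n * pm_weight n (m, q))
           \<le> ((\<Sum>n | n \<in> {1..N} \<and> n dvd q ^ m - 1. real n)
               + (\<Sum>n | n \<in> {1..N} \<and> n dvd q ^ m + 1. real n)) / real (q ^ m)"
proof -
  have "real n * pm_weight n (m, q)
          \<le> ((if n dvd q ^ m - 1 then real n else 0) + (if n dvd q ^ m + 1 then real n else 0)) / real (q ^ m)"
    for n
  proof (cases "q \<in> pm_primes n m")
    case True
    then have "q ^ m > 0"
      using pm_primes_subset by fastforce
    have "real n * pm_weight n (m, q) = real n / (real m * real (q ^ m))"
      using True unfolding pm_weight_def by simp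
    also have "\<dots> \<le> real n / real (q ^ m)"
      using assms \<open>q ^ m > 0\<close> by (intro divide_left_mono) auto
    also have "\<dots> \<le> ((if n dvd q ^ m - 1 then real n else 0) + (if n dvd q ^ m + 1 then real n else 0))
                      / real (q ^ m)"
      using pm_primes_dvd[OF True] by (intro divide_right_mono) auto
    finally show ?thesis .
  next
    case False
    then show ?thesis
      by (simp add: pm_weight_def)
  qed
  then have "(\<Sum>n\<in>{1..N}. real n * pm_weight n (m, q))
      \<le> (\<Sum>n\<in>{1..N}. ((if n dvd q ^ m - 1 then real n else 0) + (if n dvd q ^ m + 1 then real n else 0))
                      / real (q ^ m))"
    by (rule sum_mono)
  also have "\<dots> = ((\<Sum>n | n \<in> {1..N} \<and> n dvd q ^ m - 1. real n)
                    + (\<Sum>n | n \<in> {1..N} \<and> n dvd q ^ m + 1. real n)) / real (q ^ m)"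
    by (simp only: sum.inter_filter finite_atLeastAtMost sum.distrib flip: sum_divide_distrib)
  finally show ?thesis .
qed

lemma sum_pm_weight_le:
  assumes "m \<ge> 2" "q \<ge> 2"
  shows "(\<Sum>n\<in>{1..N}. real n * pm_weight n (m, q))
           \<le> 12 * real N powr (35/36) * real q powr (-(19/36 * real m))"
proof -
  define Q where "Q = q ^ m"
  have "(2::nat) ^ 2 \<le> 2 ^ m"
    using assms(1) by (rule power_increasing) simp
  also have "\<dots> \<le> q ^ m"
    using assms(2) by (rule power_mono) simp
  finally have "Q \<ge> 4"
    unfolding Q_def by simp
  define D where "D M = (\<Sum>n | n \<in> {1..N} \<and> n dvd M. real n)" for M
  have "(\<Sum>n\<in>{1..N}. real n * pm_weight n (m, q)) \<le> (D (Q - 1) + D (Q + 1)) / real Q"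
    unfolding D_def Q_def using assms(1) by (intro sum_mult_pm_weight_le) simp
  also have "\<dots> \<le> (6 * real N powr (35/36) * real Q powr (17/36) + 6 * real N powr (35/36) * real Q powr (17/36)) / real Q"
  proof -
    have "D M \<le> 6 * real N powr (35/36) * real Q powr (17/36)" if "0 < M" "M \<le> 2 * Q" for M
    proof -
      have "real M powr (17/36) \<le> real (2 * Q) powr (17/36)"
        using that by (intro powr_mono2) auto
      also have "\<dots> = 2 powr (17/36) * real Q powr (17/36)"
        by (simp add: powr_mult)
      also have "\<dots> \<le> 2 * real Q powr (17/36)"
        using powr_mono[of "17/36" 1 "2::real"] by (intro mult_right_mono) auto
      finally have "3 * real N powr (35/36) * real M powr (17/36)
          \<le> 3 * real N powr (35/36) * (2 * real Q powr (17/36))"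
        by (intro mult_left_mono) auto
      with sum_bounded_divisors_le_powr[OF \<open>0 < M\<close>, of N] show ?thesis
        unfolding D_def by linarith
    qed
    then show ?thesis
      using \<open>Q \<ge> 4\<close> by (intro divide_right_mono add_mono) auto
  qed
  also have "\<dots> = 12 * real N powr (35/36) * (real Q powr (17/36) / real Q)"
    by simp
  also have "real Q powr (17/36) / real Q = real q powr (-(19/36 * real m))"
    using assms by (simp add: Q_def powr_realpow [symmetric] powr_powr flip: powr_diff)
  finally show ?thesis .
qed

lemma sum_weighted_S_le: "\<exists>K. \<forall>N. (\<Sum>n\<in>{1..N}. real n * S n) \<le> K * real N powr (35/36)"
proof -
  define G :: "nat \<times> nat \<Rightarrow> real" where "G = (\<lambda>(m, q). real q powr (-(19/36 * real m)))"
  have "(\<Sum>n\<in>{1..N}. real n * S n) \<le> 12 * infsum G ({2..} \<times> {2..}) * real N powr (35/36)" for N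
  proof -
    have "((\<lambda>x. \<Sum>n\<in>{1..N}. real n * pm_weight n x) has_sum (\<Sum>n\<in>{1..N}. real n * S n)) ({2..} \<times> {2..})"
      by (intro has_sum_sum has_sum_cmult_right S_has_sum) auto
    moreover have "((\<lambda>x. 12 * real N powr (35/36) * G x) has_sum
                     (12 * real N powr (35/36) * infsum G ({2..} \<times> {2..}))) ({2..} \<times> {2..})"
      unfolding G_def by (intro has_sum_cmult_right has_sum_infsum summable_on_powr_pairs) simp
    ultimately have "(\<Sum>n\<in>{1..N}. real n * S n) \<le> 12 * real N powr (35/36) * infsum G ({2..} \<times> {2..})"
      by (rule has_sum_mono) (use sum_pm_weight_le in \<open>auto simp: G_def\<close>)
    then show ?thesis
      by (simp add: ac_simps)
  qed
  then show ?thesis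
    by blast
qed

lemma card_exceptional_le:
  fixes f :: "nat \<Rightarrow> real"
  assumes nonneg: "\<And>n. f n \<ge> 0" and "f 0 = 0"
    and partial_sums: "\<And>N. (\<Sum>n\<in>{1..N}. f n) \<le> K * real N powr a"
    and exceptional: "\<And>n. n \<in> E \<Longrightarrow> real n powr (-b) < f n"
    and "a \<ge> 0" "b \<ge> 0" "x \<ge> 1"
  shows "real (card {n\<in>E. real n \<le> x}) \<le> K * x powr (a + b)"
proof -
  define N where "N = nat \<lfloor>x\<rfloor>"
  define A where "A = {n\<in>E. real n \<le> x}"
  have "0 \<notin> E"
    using exceptional[of 0] \<open>f 0 = 0\<close> by auto
  then have "A \<subseteq> {1..N}"
    unfolding A_def N_def by (auto simp: le_nat_floor Suc_le_eq intro: gr0I)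
  have "K \<ge> 0"
    using partial_sums[of 1] nonneg[of 1] by simp
  have pointwise: "1 \<le> x powr b * f n" if "n \<in> A" for n
  proof -
    have "n \<ge> 1"
      using that \<open>A \<subseteq> {1..N}\<close> by auto
    then have "x powr (-b) \<le> real n powr (-b)"
      using that \<open>b \<ge> 0\<close> unfolding A_def by (intro powr_mono2') auto
    also have "\<dots> \<le> f n"
      using that exceptional unfolding A_def by (simp add: less_imp_le)
    finally have "x powr b * x powr (-b) \<le> x powr b * f n"
      by (rule mult_left_mono) simp
    then show ?thesis
      using \<open>x \<ge> 1\<close> by (simp flip: powr_add)
  qed
  have "real (card A) = (\<Sum>n\<in>A. 1)"
    by simp
  also have "\<dots> \<le> (\<Sum>n\<in>A. x powr b * f n)"
    using pointwise by (rule sum_mono)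
  also have "\<dots> \<le> (\<Sum>n\<in>{1..N}. x powr b * f n)"
    using \<open>A \<subseteq> {1..N}\<close> nonneg by (intro sum_mono2) auto
  also have "\<dots> \<le> x powr b * (K * real N powr a)"
    using partial_sums[of N] by (simp add: mult_left_mono flip: sum_distrib_left)
  also have "\<dots> \<le> x powr b * (K * x powr a)"
    using \<open>K \<ge> 0\<close> \<open>a \<ge> 0\<close> \<open>x \<ge> 1\<close> unfolding N_def
    by (intro mult_left_mono powr_mono2) auto
  also have "\<dots> = K * x powr (a + b)"
    by (simp add: powr_add)
  finally show ?thesis
    unfolding A_def .
qed

lemma smallo_inverse_off_exceptional:
  fixes g :: "nat \<Rightarrow> real"
  assumes "\<And>n. g n \<ge> 0" "b > 0"
    and "\<And>n. n \<in> F \<Longrightarrow> real n * g n \<le> real n powr (-b)"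
  shows "g \<in> o[inf sequentially (principal F)](\<lambda>n. 1 / real n)"
proof (rule landau_o.smallI)
  fix c :: real
  assume "c > 0"
  have "((\<lambda>n. real n powr (-b)) \<longlongrightarrow> 0) sequentially"
    using \<open>b > 0\<close> by (intro tendsto_neg_powr filterlim_real_sequentially) auto
  then have "\<forall>\<^sub>F n in sequentially. real n powr (-b) < c"
    using \<open>c > 0\<close> by (rule order_tendstoD)
  then show "\<forall>\<^sub>F n in inf sequentially (principal F). norm (g n) \<le> c * norm (1 / real n)"
    unfolding eventually_inf_principal using eventually_gt_at_top[of "0::nat"]
  proof eventually_elim
    case (elim n)
    show ?case
    proof
      assume "n \<in> F"
      then have "real n * g n \<le> c"
        using assms(3) elim by fastforce
      then show "norm (g n) \<le> c * norm (1 / real n)"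
        using elim assms(1)[of n] by (simp add: field_simps)
    qed
  qed
qed

theorem proposition1:
  shows "\<exists>E :: nat set.
     (\<lambda>x::real. real (card {n\<in>E. real n \<le> x})) \<in> o[at_top](\<lambda>x. x / ln x) \<and>
     S \<in> o[inf sequentially (principal (- E))](\<lambda>n. 1 / real n)"
proof (intro exI conjI)
  define E where "E = {n. real n powr (-(1/72)) < real n * S n}"
  obtain K where K: "\<And>N. (\<Sum>n\<in>{1..N}. real n * S n) \<le> K * real N powr (35/36)"
    using sum_weighted_S_le by blast
  have S_nonneg: "S n \<ge> 0" for n
    using S_has_sum by (rule has_sum_nonneg) (auto simp: pm_weight_def)
  have "eventually (\<lambda>x. real (card {n\<in>E. real n \<le> x}) \<le> K * x powr (35/36 + 1/72)) at_top"
    using eventually_ge_at_top[of "1::real"]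
    by eventually_elim (rule card_exceptional_le[OF _ _ K], auto simp: E_def S_nonneg)
  then have "(\<lambda>x::real. real (card {n\<in>E. real n \<le> x})) \<in> O(\<lambda>x. x powr (71/72))"
    by (intro bigoI[where c = K]) (auto elim!: eventually_mono)
  also have "(\<lambda>x::real. x powr (71/72)) \<in> o(\<lambda>x. x / ln x)"
    by real_asymp
  finally show "(\<lambda>x::real. real (card {n\<in>E. real n \<le> x})) \<in> o(\<lambda>x. x / ln x)" .
  show "S \<in> o[inf sequentially (principal (- E))](\<lambda>n. 1 / real n)"
    by (rule smallo_inverse_off_exceptional[where b = "1/72"]) (auto simp: E_def S_nonneg)
qed

end
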